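(* The dominant face $\mathcal{D}$ of $\mathcal{R}_{JD}$ equals the set of all $(R_1,\ldots,R_K,C_1,\ldots,C_L)\in\mathbb{R}^{K+L}$ such that, for all $\mathcal{S}\subseteq[K]$ and $\mathcal{T}\subseteq[L]$, $$I(Y_{\mathcal{T}};\hat Y_{\mathcal{T}}\mid X_1^K)-I(X_{\mathcal{S}};\hat Y_{\mathcal{T}^c}\mid X_{\mathcal{S}^c})\ \le\ C(\mathcal{T})-R(\mathcal{S})\ \le\ I(Y_{\mathcal{T}};\hat Y_{\mathcal{T}}\mid X_{\mathcal{S}}).$$
   Context: Fix integers $K,L\ge 1$ and finite alphabets. Let $X_1,\ldots,X_K,Y_1,\ldots,Y_L,\hat Y_1,\ldots,\hat Y_L$ be random variables with joint pmf $\prod_{k=1}^K p(x_k)\, p(y_1,\ldots,y_L\mid x_1,\ldots,x_K)\prod_{\ell=1}^L p(\hat y_\ell\mid y_\ell)$. Thus the $X_k$ are mutually independent, and each $\hat Y_\ell$ is conditionally independent of all other variables given $Y_\ell$. Notation: $X_{\mathcal{A}}=(X_i:i\in\mathcal{A})$, and similarly for $Y_{\mathcal{B}},\hat Y_{\mathcal{B}}$. $X_1^K=(X_1,\ldots,X_K)$, $Y_1^L=(Y_1,\ldots,Y_L)$, $\hat Y_1^L=(\hat Y_1,\ldots,\hat Y_L)$. Complements are taken in $[K]$ for $X$-indices and in $[L]$ for $Y$/$\hat Y$-indices. $R(\mathcal{S})=\sum_{i\in\mathcal{S}}R_i$ and $C(\mathcal{T})=\sum_{j\in\mathcal{T}}C_j$.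 Empty sums and mutual informations involving an empty collection are $0$. $\mathcal{R}_{JD}$ is the set of $(R_1,\ldots,R_K,C_1,\ldots,C_L)\in\mathbb{R}_{\ge0}^{K+L}$ with $$C(\mathcal{T})-R(\mathcal{S})\ge I(Y_{\mathcal{T}};\hat Y_{\mathcal{T}}\mid X_1^K)-I(X_{\mathcal{S}};\hat Y_{\mathcal{T}^c}\mid X_{\mathcal{S}^c})\quad\text{for all }\mathcal{S}\subseteq[K],\ \mathcal{T}\subseteq[L].$$ The dominant face is $$\mathcal{D}=\{(R,C)\in\mathcal{R}_{JD}: C([L])-R([K])=I(Y_1^L;\hat Y_1^L\mid X_1^K)\}.$$ *)

theory Defs
  imports "HOL-Probability.Probability" "HOL-Library.FuncSet"
begin

definition CMI :: "'o pmf \<Rightarrow> ('o \<Rightarrow> 'x) \<Rightarrow> ('o \<Rightarrow> 'y) \<Rightarrow> ('o \<Rightarrow> 'z) \<Rightarrow> real" where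
  "CMI p A B C = prob_space.conditional_mutual_information (measure_pmf p) 2
     (count_space (range A)) (count_space (range B)) (count_space (range C)) A B C"

text \<open>The joint distribution of (X_1^K, Y_1^L, Yhat_1^L):
  prod_k p(x_k) * p(y | x) * prod_l p(yhat_l | y_l).  Indices are 1..K and 1..L.\<close>
definition jd_pmf :: "nat \<Rightarrow> nat \<Rightarrow> (nat \<Rightarrow> 'a pmf) \<Rightarrow> ((nat \<Rightarrow> 'a) \<Rightarrow> (nat \<Rightarrow> 'b) pmf)
    \<Rightarrow> (nat \<Rightarrow> 'b \<Rightarrow> 'c pmf) \<Rightarrow> ((nat \<Rightarrow> 'a) \<times> (nat \<Rightarrow> 'b) \<times> (nat \<Rightarrow> 'c)) pmf" where
  "jd_pmf K L px W Q =
     bind_pmf (Pi_pmf {1..K} undefined px) (\<lambda>x.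
     bind_pmf (W x) (\<lambda>y.
     bind_pmf (Pi_pmf {1..L} undefined (\<lambda>l. Q l (y l))) (\<lambda>yh.
     return_pmf (x, y, yh))))"

definition Xs :: "nat set \<Rightarrow> (nat \<Rightarrow> 'a) \<times> (nat \<Rightarrow> 'b) \<times> (nat \<Rightarrow> 'c) \<Rightarrow> (nat \<Rightarrow> 'a)" where
  "Xs S \<omega> = restrict (fst \<omega>) S"
definition Ys :: "nat set \<Rightarrow> (nat \<Rightarrow> 'a) \<times> (nat \<Rightarrow> 'b) \<times> (nat \<Rightarrow> 'c) \<Rightarrow> (nat \<Rightarrow> 'b)" where
  "Ys T \<omega> = restrict (fst (snd \<omega>)) T"
definition Yhs :: "nat set \<Rightarrow> (nat \<Rightarrow> 'a) \<times> (nat \<Rightarrow> 'b) \<times> (nat \<Rightarrow> 'c) \<Rightarrow> (nat \<Rightarrow> 'c)" where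
  "Yhs T \<omega> = restrict (snd (snd \<omega>)) T"

text \<open>The region R_JD: pairs (R, C) with R = (R_1..R_K), C = (C_1..C_L)
  (coordinates outside 1..K resp. 1..L are irrelevant).\<close>
definition R_JD :: "nat \<Rightarrow> nat \<Rightarrow> ((nat \<Rightarrow> 'a) \<times> (nat \<Rightarrow> 'b) \<times> (nat \<Rightarrow> 'c)) pmf
    \<Rightarrow> ((nat \<Rightarrow> real) \<times> (nat \<Rightarrow> real)) set" where
  "R_JD K L p = {(R, C).
     (\<forall>k\<in>{1..K}. 0 \<le> R k) \<and> (\<forall>l\<in>{1..L}. 0 \<le> C l) \<and>
     (\<forall>S\<subseteq>{1..K}. \<forall>T\<subseteq>{1..L}.
        sum C T - sum R S \<ge>
          CMI p (Ys T) (Yhs T) (Xs {1..K}) - CMI p (Xs S) (Yhs ({1..L} - T)) (Xs ({1..K} - S)))}"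

definition dominant_face :: "nat \<Rightarrow> nat \<Rightarrow> ((nat \<Rightarrow> 'a) \<times> (nat \<Rightarrow> 'b) \<times> (nat \<Rightarrow> 'c)) pmf
    \<Rightarrow> ((nat \<Rightarrow> real) \<times> (nat \<Rightarrow> real)) set" where
  "dominant_face K L p = {(R, C). (R, C) \<in> R_JD K L p \<and>
     sum C {1..L} - sum R {1..K} = CMI p (Ys {1..L}) (Yhs {1..L}) (Xs {1..K})}"

end

theory Submission
  imports Defs
begin

text \<open>For the upper bound at
  \<open>(S, T)\<close>, subtract the lower bound at the complementary pair \<open>(S\<^sup>c, T\<^sup>c)\<close> from the equation
  of the dominant face; what remains is the information inequality
  \<open>I(Y;Yhat|X) - I(Y_T\<^sup>c;Yhat_T\<^sup>c|X) + I(X_S\<^sup>c;Yhat_T|X_S) \<le> I(Y_T;Yhat_T|X_S)\<close>.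
  Written with conditional entropies it follows from the Markov structure of the joint law
  (\<open>Yhat_T\<close> depends on \<open>X\<close>, \<open>Y\<close>, \<open>Yhat_T\<^sup>c\<close> only through \<open>Y_T\<close>) and from the fact that
  conditioning reduces entropy. Conversely, the bounds for \<open>(S, T) = ({k}, {})\<close>, \<open>({}, {l})\<close>
  and \<open>({1..K}, {1..L})\<close> give nonnegativity of the rates and the equation of the face.\<close>

definition pmf_entropy :: "'o pmf \<Rightarrow> ('o \<Rightarrow> 'x) \<Rightarrow> real" where
  "pmf_entropy p F = - (\<Sum>t\<in>range F. pmf (map_pmf F p) t * log 2 (pmf (map_pmf F p) t))"

definition pmf_cond_entropy :: "'o pmf \<Rightarrow> ('o \<Rightarrow> 'x) \<Rightarrow> ('o \<Rightarrow> 'y) \<Rightarrow> real" where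
  "pmf_cond_entropy p F G = pmf_entropy p (\<lambda>\<omega>. (F \<omega>, G \<omega>)) - pmf_entropy p G"

lemma finite_range_pair:
  "finite (range F) \<Longrightarrow> finite (range G) \<Longrightarrow> finite (range (\<lambda>\<omega>. (F \<omega>, G \<omega>)))"
  by (rule finite_subset[of _ "range F \<times> range G"]) auto

lemma pmf_entropy_eq_if_determined:
  assumes F: "\<And>\<omega>. F \<omega> = f (G \<omega>)" and G: "\<And>\<omega>. G \<omega> = g (F \<omega>)"
  shows "pmf_entropy p F = pmf_entropy p G"
proof -
  have gf: "g (f (G \<omega>)) = G \<omega>" for \<omega>
    by (simp only: F[symmetric] G[symmetric])
  have range_F: "range F = f ` range G"
    by (auto simp only: F)
  have inj: "inj_on f (range G)"
    unfolding inj_on_def by (metis gf imageE)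
  have "F -` {f t} = G -` {t}" if "t \<in> range G" for t
    using that by (auto simp only: vimage_singleton_eq F) (metis gf)
  then have "pmf (map_pmf F p) (f t) = pmf (map_pmf G p) t" if "t \<in> range G" for t
    using that by (simp add: pmf_map)
  then show ?thesis
    unfolding pmf_entropy_def range_F sum.reindex[OF inj] by simp
qed

lemma pmf_map_comp_eq_sum:
  assumes "finite (range F)"
  shows "pmf (map_pmf (\<lambda>\<omega>. g (F \<omega>)) p) u = (\<Sum>t\<in>{t\<in>range F. g t = u}. pmf (map_pmf F p) t)"
proof -
  have "pmf (map_pmf (\<lambda>\<omega>. g (F \<omega>)) p) u = measure (map_pmf F p) (g -` {u})"
    by (simp add: map_pmf_comp[symmetric] pmf_map)
  also have "\<dots> = measure (map_pmf F p) {t\<in>range F. g t = u}"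
    by (rule measure_eq_AE) (auto simp: AE_measure_pmf_iff)
  also have "\<dots> = (\<Sum>t\<in>{t\<in>range F. g t = u}. pmf (map_pmf F p) t)"
    using assms by (intro measure_measure_pmf_finite) auto
  finally show ?thesis .
qed

lemma sum_pmf_map_comp:
  assumes "finite (range F)"
  shows "(\<Sum>t\<in>range F. pmf (map_pmf F p) t * \<phi> (g t)) =
         (\<Sum>u\<in>range (\<lambda>\<omega>. g (F \<omega>)). pmf (map_pmf (\<lambda>\<omega>. g (F \<omega>)) p) u * \<phi> u)"
proof -
  have "range (\<lambda>\<omega>. g (F \<omega>)) = g ` range F" by auto
  then have "(\<Sum>u\<in>range (\<lambda>\<omega>. g (F \<omega>)). pmf (map_pmf (\<lambda>\<omega>. g (F \<omega>)) p) u * \<phi> u)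
     = (\<Sum>u\<in>g ` range F. \<Sum>t\<in>{t\<in>range F. g t = u}. pmf (map_pmf F p) t * \<phi> (g t))"
    unfolding pmf_map_comp_eq_sum[OF assms] sum_distrib_right by (intro sum.cong) auto
  also have "\<dots> = (\<Sum>t\<in>range F. pmf (map_pmf F p) t * \<phi> (g t))"
    using assms by (intro sum.group) auto
  finally show ?thesis by simp
qed

lemma pmf_map_le_pmf_map_comp:
  assumes "\<And>\<omega>. G \<omega> = g (F \<omega>)"
  shows "pmf (map_pmf F p) t \<le> pmf (map_pmf G p) (g t)"
  unfolding pmf_map using assms by (intro measure_pmf.finite_measure_mono) auto

lemma pmf_map_pair_kernel:
  assumes "map_pmf (\<lambda>\<omega>. (Z \<omega>, U \<omega>)) p = bind_pmf (map_pmf U p) (\<lambda>u. map_pmf (\<lambda>z. (z, u)) (\<kappa> u))"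
  shows "pmf (map_pmf (\<lambda>\<omega>. (Z \<omega>, U \<omega>)) p) (z, u) = pmf (map_pmf U p) u * pmf (\<kappa> u) z"
proof -
  have "pmf (map_pmf (\<lambda>z. (z, u')) (\<kappa> u')) (z, u) = pmf (\<kappa> u) z * indicator {u} u'" for u'
  proof (cases "u' = u")
    case True
    have "(\<lambda>z'. (z', u)) -` {(z, u)} = {z}" by auto
    then show ?thesis using True by (simp add: pmf_map measure_pmf_single)
  next
    case False
    then have "(\<lambda>z'. (z', u')) -` {(z, u)} = {}" by auto
    then show ?thesis using False by (simp add: pmf_map)
  qed
  then show ?thesis
    unfolding assms pmf_bind by (simp add: measure_pmf_single mult.commute)
qed

lemma pmf_cond_entropy_kernel_sum:
  assumes fin_Z: "finite (range Z)" and fin_U: "finite (range U)"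
    and kernel: "map_pmf (\<lambda>\<omega>. (Z \<omega>, U \<omega>)) p = bind_pmf (map_pmf U p) (\<lambda>u. map_pmf (\<lambda>z. (z, u)) (\<kappa> u))"
  shows "pmf_cond_entropy p Z U = - (\<Sum>t\<in>range (\<lambda>\<omega>. (Z \<omega>, U \<omega>)).
           pmf (map_pmf (\<lambda>\<omega>. (Z \<omega>, U \<omega>)) p) t * log 2 (pmf (\<kappa> (snd t)) (fst t)))"
proof -
  let ?J = "\<lambda>\<omega>. (Z \<omega>, U \<omega>)"
  have split_log: "pmf (map_pmf ?J p) t * log 2 (pmf (map_pmf ?J p) t) =
      pmf (map_pmf ?J p) t * log 2 (pmf (map_pmf U p) (snd t))
      + pmf (map_pmf ?J p) t * log 2 (pmf (\<kappa> (snd t)) (fst t))" for t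
  proof (cases "pmf (map_pmf ?J p) t = 0")
    case False
    obtain z u where t: "t = (z, u)" by (cases t)
    have "pmf (map_pmf U p) u * pmf (\<kappa> u) z > 0"
      using False pmf_map_pair_kernel[OF kernel, of z u] unfolding t
      by (metis pmf_nonneg less_eq_real_def)
    then have "pmf (map_pmf U p) u > 0" "pmf (\<kappa> u) z > 0"
      by (simp_all add: zero_less_mult_iff)
    then show ?thesis
      unfolding t pmf_map_pair_kernel[OF kernel] by (simp add: log_mult distrib_left)
  qed simp
  have "(\<Sum>t\<in>range ?J. pmf (map_pmf ?J p) t * log 2 (pmf (map_pmf U p) (snd t)))
      = (\<Sum>u\<in>range U. pmf (map_pmf U p) u * log 2 (pmf (map_pmf U p) u))"
    using sum_pmf_map_comp[OF finite_range_pair[OF fin_Z fin_U], of p "\<lambda>u. log 2 (pmf (map_pmf U p) u)" snd]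
    by simp
  then show ?thesis
    unfolding pmf_cond_entropy_def pmf_entropy_def split_log sum.distrib by simp
qed

lemma pmf_cond_entropy_kernel:
  assumes fin_Z: "finite (range Z)" and fin_W: "finite (range W)"
    and kernel: "map_pmf (\<lambda>\<omega>. (Z \<omega>, W \<omega>)) p =
        bind_pmf (map_pmf W p) (\<lambda>w. map_pmf (\<lambda>z. (z, w)) (\<kappa> (g w)))"
  shows "pmf_cond_entropy p Z W = pmf_cond_entropy p Z (\<lambda>\<omega>. g (W \<omega>))"
proof -
  have kernel_g: "map_pmf (\<lambda>\<omega>. (Z \<omega>, g (W \<omega>))) p =
        bind_pmf (map_pmf (\<lambda>\<omega>. g (W \<omega>)) p) (\<lambda>u. map_pmf (\<lambda>z. (z, u)) (\<kappa> u))"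
  proof -
    have "map_pmf (\<lambda>\<omega>. (Z \<omega>, g (W \<omega>))) p = map_pmf (\<lambda>(z, w). (z, g w)) (map_pmf (\<lambda>\<omega>. (Z \<omega>, W \<omega>)) p)"
      by (simp add: map_pmf_comp)
    also have "\<dots> = bind_pmf (map_pmf (\<lambda>\<omega>. g (W \<omega>)) p) (\<lambda>u. map_pmf (\<lambda>z. (z, u)) (\<kappa> u))"
      unfolding kernel by (simp add: map_bind_pmf map_pmf_comp bind_map_pmf)
    finally show ?thesis .
  qed
  have fin_gW: "finite (range (\<lambda>\<omega>. g (W \<omega>)))"
    using fin_W by (metis image_image finite_imageI)
  show ?thesis
    unfolding pmf_cond_entropy_kernel_sum[OF fin_Z fin_W kernel]
      pmf_cond_entropy_kernel_sum[OF fin_Z fin_gW kernel_g]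
    using sum_pmf_map_comp[OF finite_range_pair[OF fin_Z fin_W], of p
        "\<lambda>s. log 2 (pmf (\<kappa> (snd s)) (fst s))" "\<lambda>t. (fst t, g (snd t))"]
    by simp
qed

lemma simple_function_measure_pmf: "finite (range F) \<Longrightarrow> simple_function (measure_pmf p) F"
  by (simp add: simple_function_def)

lemma CMI_nonneg:
  assumes "finite (range X)" "finite (range Y)" "finite (range Z)"
  shows "0 \<le> CMI p X Y Z"
proof -
  interpret information_space "measure_pmf p" 2 by standard simp
  show ?thesis
    unfolding CMI_def using conditional_mutual_information_nonneg[OF
        simple_function_measure_pmf[OF assms(1)] simple_function_measure_pmf[OF assms(2)]
        simple_function_measure_pmf[OF assms(3)]]
    by simp
qed

lemma CMI_eq_entropies:
  fixes X :: "'o \<Rightarrow> 'x" and Y :: "'o \<Rightarrow> 'y" and Z :: "'o \<Rightarrow> 'z"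
  assumes fin_X: "finite (range X)" and fin_Y: "finite (range Y)" and fin_Z: "finite (range Z)"
  shows "CMI p X Y Z = pmf_entropy p (\<lambda>\<omega>. (X \<omega>, Z \<omega>)) + pmf_entropy p (\<lambda>\<omega>. (Y \<omega>, Z \<omega>))
           - pmf_entropy p (\<lambda>\<omega>. (X \<omega>, Y \<omega>, Z \<omega>)) - pmf_entropy p Z"
proof -
  interpret information_space "measure_pmf p" 2 by standard simp
  let ?P = "\<lambda>F. pmf (map_pmf F p)"
  have distr: "simple_distributed (measure_pmf p) F (?P F)" if "finite (range F)" for F :: "_ \<Rightarrow> 'q"
    by (rule measure_pmf.simple_distributedI) (auto simp: simple_function_measure_pmf that pmf_map)
  let ?XZ = "\<lambda>\<omega>. (X \<omega>, Z \<omega>)" and ?YZ = "\<lambda>\<omega>. (Y \<omega>, Z \<omega>)" and ?XYZ = "\<lambda>\<omega>. (X \<omega>, Y \<omega>, Z \<omega>)"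
  have fin_XZ: "finite (range ?XZ)" and fin_YZ: "finite (range ?YZ)" and fin_XYZ: "finite (range ?XYZ)"
    using fin_X fin_Y fin_Z by (auto intro!: finite_range_pair)
  have marginal: "(\<Sum>t\<in>range ?XYZ. ?P ?XYZ t * log 2 (?P (\<lambda>\<omega>. g (?XYZ \<omega>)) (g t))) =
      - pmf_entropy p (\<lambda>\<omega>. g (?XYZ \<omega>))" for g :: "_ \<Rightarrow> 'q"
    using sum_pmf_map_comp[OF fin_XYZ, of p "\<lambda>s. log 2 (?P (\<lambda>\<omega>. g (?XYZ \<omega>)) s)" g]
    by (simp add: pmf_entropy_def)
  have "CMI p X Y Z = (\<Sum>(x, y, z)\<in>range ?XYZ. ?P ?XYZ (x, y, z) *
      log 2 (?P ?XYZ (x, y, z) / (?P ?XZ (x, z) * (?P ?YZ (y, z) / ?P Z z))))"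
    unfolding CMI_def
    using conditional_mutual_information_eq[OF distr[OF fin_Z] distr[OF fin_YZ] distr[OF fin_XZ] distr[OF fin_XYZ]]
    by simp
  also have "\<dots> = (\<Sum>t\<in>range ?XYZ. ?P ?XYZ t * log 2 (?P ?XYZ t))
       - (\<Sum>t\<in>range ?XYZ. ?P ?XYZ t * log 2 (?P ?XZ (fst t, snd (snd t))))
       - (\<Sum>t\<in>range ?XYZ. ?P ?XYZ t * log 2 (?P ?YZ (snd t)))
       + (\<Sum>t\<in>range ?XYZ. ?P ?XYZ t * log 2 (?P Z (snd (snd t))))"
    unfolding sum_subtractf[symmetric] sum.distrib[symmetric]
  proof (intro sum.cong refl, clarify)
    fix x :: 'x and y :: 'y and z :: 'z
    let ?t = "(x, y, z)"
    show "?P ?XYZ (x, y, z) * log 2 (?P ?XYZ (x, y, z) / (?P ?XZ (x, z) * (?P ?YZ (y, z) / ?P Z z))) =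
      ?P ?XYZ ?t * log 2 (?P ?XYZ ?t) - ?P ?XYZ ?t * log 2 (?P ?XZ (fst ?t, snd (snd ?t))) -
      ?P ?XYZ ?t * log 2 (?P ?YZ (snd ?t)) + ?P ?XYZ ?t * log 2 (?P Z (snd (snd ?t)))"
    proof (cases "?P ?XYZ (x, y, z) = 0")
      case False
      then have "?P ?XYZ (x, y, z) > 0"
        by (simp add: less_le)
      moreover have "?P ?XYZ (x, y, z) \<le> ?P ?XZ (x, z)" "?P ?XYZ (x, y, z) \<le> ?P ?YZ (y, z)"
        "?P ?XYZ (x, y, z) \<le> ?P Z z"
        using pmf_map_le_pmf_map_comp[of ?XZ "\<lambda>t. (fst t, snd (snd t))" ?XYZ p "(x, y, z)"]
          pmf_map_le_pmf_map_comp[of ?YZ snd ?XYZ p "(x, y, z)"]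
          pmf_map_le_pmf_map_comp[of Z "\<lambda>t. snd (snd t)" ?XYZ p "(x, y, z)"]
        by simp_all
      ultimately show ?thesis
        by (simp add: log_divide log_mult algebra_simps)
    qed simp
  qed
  also have "\<dots> = pmf_entropy p ?XZ + pmf_entropy p ?YZ - pmf_entropy p ?XYZ - pmf_entropy p Z"
    using marginal[of "\<lambda>t. (fst t, snd (snd t))"] marginal[of snd] marginal[of "\<lambda>t. snd (snd t)"]
    by (simp add: pmf_entropy_def)
  finally show ?thesis .
qed

lemma CMI_eq_cond_entropy:
  assumes "finite (range X)" "finite (range Y)" "finite (range Z)"
  shows "CMI p X Y Z = pmf_cond_entropy p Y Z - pmf_cond_entropy p Y (\<lambda>\<omega>. (X \<omega>, Z \<omega>))"
proof -
  have "pmf_entropy p (\<lambda>\<omega>. (Y \<omega>, X \<omega>, Z \<omega>)) = pmf_entropy p (\<lambda>\<omega>. (X \<omega>, Y \<omega>, Z \<omega>))"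
    by (rule pmf_entropy_eq_if_determined[where f="\<lambda>(x, y, z). (y, x, z)" and g="\<lambda>(y, x, z). (x, y, z)"])
      simp_all
  then show ?thesis
    unfolding CMI_eq_entropies[OF assms] pmf_cond_entropy_def by simp
qed

lemma pmf_cond_entropy_cong:
  assumes "\<And>\<omega>. F \<omega> = f (F' \<omega>)" "\<And>\<omega>. F' \<omega> = f' (F \<omega>)"
    and "\<And>\<omega>. G \<omega> = g (G' \<omega>)" "\<And>\<omega>. G' \<omega> = g' (G \<omega>)"
  shows "pmf_cond_entropy p F G = pmf_cond_entropy p F' G'"
proof -
  have "pmf_entropy p (\<lambda>\<omega>. (F \<omega>, G \<omega>)) = pmf_entropy p (\<lambda>\<omega>. (F' \<omega>, G' \<omega>))"
    by (rule pmf_entropy_eq_if_determined[where f="map_prod f g" and g="map_prod f' g'"])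
      (simp_all add: assms[symmetric])
  moreover have "pmf_entropy p G = pmf_entropy p G'"
    by (rule pmf_entropy_eq_if_determined) (fact assms)+
  ultimately show ?thesis
    unfolding pmf_cond_entropy_def by simp
qed

lemma pmf_cond_entropy_pair:
  "pmf_cond_entropy p (\<lambda>\<omega>. (F \<omega>, G \<omega>)) C =
     pmf_cond_entropy p G C + pmf_cond_entropy p F (\<lambda>\<omega>. (G \<omega>, C \<omega>))"
proof -
  have "pmf_entropy p (\<lambda>\<omega>. ((F \<omega>, G \<omega>), C \<omega>)) = pmf_entropy p (\<lambda>\<omega>. (F \<omega>, G \<omega>, C \<omega>))"
    by (rule pmf_entropy_eq_if_determined[where f="\<lambda>(f, g, c). ((f, g), c)" and g="\<lambda>((f, g), c). (f, g, c)"])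
      simp_all
  then show ?thesis
    unfolding pmf_cond_entropy_def by simp
qed

lemma pmf_cond_entropy_le:
  assumes "finite (range F)" "finite (range G)" "finite (range C)"
  shows "pmf_cond_entropy p F (\<lambda>\<omega>. (G \<omega>, C \<omega>)) \<le> pmf_cond_entropy p F C"
  using CMI_nonneg[OF assms(2,1,3)] CMI_eq_cond_entropy[OF assms(2,1,3)] by simp

lemma pmf_cond_entropy_const:
  assumes "\<And>\<omega>. F \<omega> = c"
  shows "pmf_cond_entropy p F G = 0"
proof -
  have "pmf_entropy p (\<lambda>\<omega>. (F \<omega>, G \<omega>)) = pmf_entropy p G"
    by (rule pmf_entropy_eq_if_determined[where f="Pair c" and g=snd]) (simp_all add: assms)
  then show ?thesis
    unfolding pmf_cond_entropy_def by simp
qed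

lemma CMI_const_left:
  assumes "finite (range Y)" "finite (range Z)" "\<And>\<omega>. X \<omega> = c"
  shows "CMI p X Y Z = 0"
proof -
  have "finite (range X)"
    using assms(3) by (metis finite.simps finite_subset image_subsetI insertI1)
  moreover have "pmf_cond_entropy p Y (\<lambda>\<omega>. (X \<omega>, Z \<omega>)) = pmf_cond_entropy p Y Z"
    by (rule pmf_cond_entropy_cong[where f=id and f'=id and g="Pair c" and g'=snd]) (simp_all add: assms)
  ultimately show ?thesis
    using CMI_eq_cond_entropy[of X Y Z p] assms(1,2) by simp
qed

lemma CMI_const_right:
  assumes "finite (range X)" "finite (range Z)" "\<And>\<omega>. Y \<omega> = c"
  shows "CMI p X Y Z = 0"
proof -
  have "finite (range Y)"
    using assms(3) by (metis finite.simps finite_subset image_subsetI insertI1)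
  moreover have "pmf_cond_entropy p Y Z = 0" "pmf_cond_entropy p Y (\<lambda>\<omega>. (X \<omega>, Z \<omega>)) = 0"
    using assms(3) by (rule pmf_cond_entropy_const)+
  ultimately show ?thesis
    using CMI_eq_cond_entropy[of X Y Z p] assms(1,2) by simp
qed

lemma finite_range_restrict:
  "finite S \<Longrightarrow> finite (range (\<lambda>\<omega>. restrict (f \<omega>) S :: _ \<Rightarrow> 'a::finite))"
  by (rule finite_subset[of _ "PiE S (\<lambda>_. UNIV)"]) (auto intro: finite_PiE)

lemma finite_range_Xs: "finite S \<Longrightarrow> finite (range (Xs S :: _ \<Rightarrow> nat \<Rightarrow> 'a::finite))"
  unfolding Xs_def by (rule finite_range_restrict)

lemma finite_range_Ys: "finite S \<Longrightarrow> finite (range (Ys S :: _ \<Rightarrow> nat \<Rightarrow> 'b::finite))"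
  unfolding Ys_def by (rule finite_range_restrict)

lemma finite_range_Yhs: "finite S \<Longrightarrow> finite (range (Yhs S :: _ \<Rightarrow> nat \<Rightarrow> 'c::finite))"
  unfolding Yhs_def by (rule finite_range_restrict)

lemma Pi_pmf_split:
  assumes "finite A" "T \<subseteq> A"
  shows "map_pmf (\<lambda>h. (restrict h T, restrict h (A - T))) (Pi_pmf A undefined q) =
         pair_pmf (Pi_pmf T undefined q) (Pi_pmf (A - T) undefined q)"
proof -
  let ?P = "pair_pmf (Pi_pmf T undefined q) (Pi_pmf (A - T) undefined q)"
  have fin_T: "finite T"
    using assms finite_subset by blast
  have "Pi_pmf (T \<union> (A - T)) undefined q = map_pmf (\<lambda>(f, g) x. if x \<in> T then f x else g x) ?P"
    using assms fin_T by (intro Pi_pmf_union) auto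
  moreover have "T \<union> (A - T) = A"
    using assms by auto
  moreover have "map_pmf (\<lambda>h. (restrict h T, restrict h (A - T)))
      (map_pmf (\<lambda>(f, g) x. if x \<in> T then f x else g x) ?P) = map_pmf id ?P"
    unfolding map_pmf_comp using set_Pi_pmf_subset[OF fin_T, of undefined q] set_Pi_pmf_subset[of "A - T" undefined q] assms(1)
    by (intro map_pmf_cong refl) (fastforce simp: fun_eq_iff set_pair_pmf)
  ultimately show ?thesis
    by simp
qed

text \<open>\<open>V\<close> is any function of \<open>X\<close>, \<open>Y\<close> and the outputs outside \<open>T\<close>, from which \<open>g\<close> recovers
  \<open>Y_T\<close>; given \<open>V\<close>, the outputs in \<open>T\<close> are still drawn from \<open>\<Prod>l\<in>T. Q l (y l)\<close>.\<close>
lemma jd_pmf_Yhs_kernel: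
  assumes T: "T \<subseteq> {1..L}"
    and V: "\<And>x y h. V (x, y, h) = \<psi> x y (restrict h ({1..L} - T))"
    and g: "\<And>x y b. g (\<psi> x y b) = restrict y T"
  shows "map_pmf (\<lambda>\<omega>. (Yhs T \<omega>, V \<omega>)) (jd_pmf K L px W Q) =
     bind_pmf (map_pmf V (jd_pmf K L px W Q))
       (\<lambda>v. map_pmf (\<lambda>z. (z, v)) (Pi_pmf T undefined (\<lambda>l. Q l (g v l))))"
proof -
  define PT where "PT y = Pi_pmf T undefined (\<lambda>l. Q l (y l))" for y
  define PTc where "PTc y = Pi_pmf ({1..L} - T) undefined (\<lambda>l. Q l (y l))" for y
  define PL where "PL y = Pi_pmf {1..L} undefined (\<lambda>l. Q l (y l))" for y
  have split: "map_pmf (\<lambda>h. (restrict h T, restrict h ({1..L} - T))) (PL y) = pair_pmf (PT y) (PTc y)" for y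
    unfolding PL_def PT_def PTc_def by (rule Pi_pmf_split[OF finite_atLeastAtMost T])
  have marginal: "map_pmf (\<lambda>h. restrict h ({1..L} - T)) (PL y) = PTc y" for y
  proof -
    have "map_pmf (\<lambda>h. restrict h ({1..L} - T)) (PL y) =
        map_pmf snd (map_pmf (\<lambda>h. (restrict h T, restrict h ({1..L} - T))) (PL y))"
      by (simp add: map_pmf_comp)
    then show ?thesis
      unfolding split by (simp add: map_snd_pair_pmf)
  qed
  have PT_restrict: "PT (restrict y T) = PT y" for y
    unfolding PT_def by (rule Pi_pmf_cong) auto
  have swap: "bind_pmf (PL y) (\<lambda>h. return_pmf (restrict h T, \<psi> x y (restrict h ({1..L} - T))))
     = bind_pmf (PL y) (\<lambda>h. map_pmf (\<lambda>z. (z, \<psi> x y (restrict h ({1..L} - T)))) (PT y))" for x y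
  proof -
    have "bind_pmf (PL y) (\<lambda>h. return_pmf (restrict h T, \<psi> x y (restrict h ({1..L} - T))))
       = map_pmf (\<lambda>(a, b). (a, \<psi> x y b)) (map_pmf (\<lambda>h. (restrict h T, restrict h ({1..L} - T))) (PL y))"
      by (simp add: map_pmf_comp map_pmf_def bind_assoc_pmf bind_return_pmf)
    also have "\<dots> = bind_pmf (PT y) (\<lambda>a. bind_pmf (PTc y) (\<lambda>b. return_pmf (a, \<psi> x y b)))"
      unfolding split pair_pmf_def by (simp add: map_bind_pmf)
    also have "\<dots> = bind_pmf (PTc y) (\<lambda>b. bind_pmf (PT y) (\<lambda>a. return_pmf (a, \<psi> x y b)))"
      by (rule bind_commute_pmf)
    also have "\<dots> = bind_pmf (PL y) (\<lambda>h. map_pmf (\<lambda>z. (z, \<psi> x y (restrict h ({1..L} - T)))) (PT y))"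
      unfolding marginal[symmetric] by (simp add: bind_map_pmf map_pmf_def bind_assoc_pmf bind_return_pmf)
    finally show ?thesis .
  qed
  show ?thesis
    unfolding jd_pmf_def PL_def[symmetric]
    by (simp add: map_bind_pmf bind_assoc_pmf bind_return_pmf bind_map_pmf Yhs_def V g PT_restrict swap[simplified] flip: PT_def)
qed

lemma jd_cond_entropy_Yhs:
  fixes px :: "nat \<Rightarrow> 'a::finite pmf" and W :: "(nat \<Rightarrow> 'a) \<Rightarrow> (nat \<Rightarrow> 'b::finite) pmf"
    and Q :: "nat \<Rightarrow> 'b \<Rightarrow> 'c::finite pmf"
  assumes T: "T \<subseteq> {1..L}" and fin_V: "finite (range V)"
    and V: "\<And>x y h. V (x, y, h) = \<psi> x y (restrict h ({1..L} - T))"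
    and g: "\<And>x y b. g (\<psi> x y b) = restrict y T"
  shows "pmf_cond_entropy (jd_pmf K L px W Q) (Yhs T) V =
         pmf_cond_entropy (jd_pmf K L px W Q) (Yhs T) (Ys T)"
proof -
  have "finite T"
    using T finite_subset by blast
  then have "pmf_cond_entropy (jd_pmf K L px W Q) (Yhs T) V =
      pmf_cond_entropy (jd_pmf K L px W Q) (Yhs T) (\<lambda>\<omega>. g (V \<omega>))"
    by (intro pmf_cond_entropy_kernel[where \<kappa>="\<lambda>v. Pi_pmf T undefined (\<lambda>l. Q l (v l))"]
        finite_range_Yhs fin_V jd_pmf_Yhs_kernel[OF T V g])
  also have "(\<lambda>\<omega>. g (V \<omega>)) = Ys T"
    by (auto simp: V g Ys_def)
  finally show ?thesis .
qed

lemma Xs_apply [simp]: "Xs S (x, y, h) = restrict x S"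
  and Ys_apply [simp]: "Ys S (x, y, h) = restrict y S"
  and Yhs_apply [simp]: "Yhs S (x, y, h) = restrict h S"
  by (simp_all add: Xs_def Ys_def Yhs_def)

lemma restrict_if_merge:
  "T \<subseteq> A \<Longrightarrow> (\<lambda>i. if i \<in> T then restrict h T i else restrict h (A - T) i) = restrict h A"
  unfolding restrict_def by (rule ext) auto

lemma pmf_cond_entropy_Yhs_split:
  assumes "T \<subseteq> A"
  shows "pmf_cond_entropy p (Yhs A) C =
     pmf_cond_entropy p (Yhs (A - T)) C + pmf_cond_entropy p (Yhs T) (\<lambda>\<omega>. (Yhs (A - T) \<omega>, C \<omega>))"
proof -
  have "pmf_cond_entropy p (Yhs A) C = pmf_cond_entropy p (\<lambda>\<omega>. (Yhs T \<omega>, Yhs (A - T) \<omega>)) C"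
    by (rule pmf_cond_entropy_cong[where f="\<lambda>(z, z') i. if i \<in> T then z i else z' i"
          and f'="\<lambda>z. (restrict z T, restrict z (A - T))" and g=id and g'=id])
      (use assms in \<open>auto simp: Yhs_def restrict_if_merge Int_absorb1\<close>)
  then show ?thesis
    by (simp add: pmf_cond_entropy_pair)
qed

lemma pmf_cond_entropy_Xs_split:
  assumes "S \<subseteq> A"
  shows "pmf_cond_entropy p F (\<lambda>\<omega>. (Xs (A - S) \<omega>, Xs S \<omega>)) = pmf_cond_entropy p F (Xs A)"
  by (rule pmf_cond_entropy_cong[where f=id and f'=id
        and g="\<lambda>a. (restrict a (A - S), restrict a S)" and g'="\<lambda>(b, c) i. if i \<in> S then c i else b i"])
    (use assms in \<open>auto simp: Xs_def restrict_if_merge Int_absorb1 Int_absorb2\<close>)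

lemma jd_CMI_complement_le:
  fixes px :: "nat \<Rightarrow> 'a::finite pmf" and W :: "(nat \<Rightarrow> 'a) \<Rightarrow> (nat \<Rightarrow> 'b::finite) pmf"
    and Q :: "nat \<Rightarrow> 'b \<Rightarrow> 'c::finite pmf"
  assumes S: "S \<subseteq> {1..K}" and T: "T \<subseteq> {1..L}"
  defines "p \<equiv> jd_pmf K L px W Q"
  shows "CMI p (Ys {1..L}) (Yhs {1..L}) (Xs {1..K})
           - CMI p (Ys ({1..L} - T)) (Yhs ({1..L} - T)) (Xs {1..K})
           + CMI p (Xs ({1..K} - S)) (Yhs T) (Xs S)
         \<le> CMI p (Ys T) (Yhs T) (Xs S)"
proof -
  have "finite S" "finite T"
    using S T finite_subset by blast+
  note fin = this finite_range_Xs finite_range_Ys finite_range_Yhs finite_range_pair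
  let ?H = "pmf_cond_entropy p"
  have markov_Y: "?H (Yhs ({1..L} - T)) (\<lambda>\<omega>. (Ys {1..L} \<omega>, Xs {1..K} \<omega>)) =
      ?H (Yhs ({1..L} - T)) (Ys ({1..L} - T))"
    unfolding p_def
    by (rule jd_cond_entropy_Yhs[where \<psi>="\<lambda>x y b. (restrict y {1..L}, restrict x {1..K})"
          and g="\<lambda>(y, a). restrict y ({1..L} - T)"])
      (auto simp: fin Int_absorb1)
  have markov_YTc: "?H (Yhs ({1..L} - T)) (\<lambda>\<omega>. (Ys ({1..L} - T) \<omega>, Xs {1..K} \<omega>)) =
      ?H (Yhs ({1..L} - T)) (Ys ({1..L} - T))"
    unfolding p_def
    by (rule jd_cond_entropy_Yhs[where \<psi>="\<lambda>x y b. (restrict y ({1..L} - T), restrict x {1..K})"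
          and g=fst])
      (auto simp: fin)
  have markov_T: "?H (Yhs T) (\<lambda>\<omega>. (Yhs ({1..L} - T) \<omega>, Ys {1..L} \<omega>, Xs {1..K} \<omega>)) =
      ?H (Yhs T) (Ys T)"
    unfolding p_def using T
    by (intro jd_cond_entropy_Yhs[where \<psi>="\<lambda>x y b. (b, restrict y {1..L}, restrict x {1..K})"
          and g="\<lambda>(b, y, a). restrict y T"])
      (auto simp: fin Int_absorb1)
  have drop_Yhs: "?H (Yhs T) (\<lambda>\<omega>. (Yhs ({1..L} - T) \<omega>, Xs {1..K} \<omega>)) \<le> ?H (Yhs T) (Xs {1..K})"
    by (intro pmf_cond_entropy_le fin) simp_all
  have drop_Xs: "?H (Yhs T) (\<lambda>\<omega>. (Ys T \<omega>, Xs S \<omega>)) \<le> ?H (Yhs T) (Ys T)"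
  proof -
    have "?H (Yhs T) (\<lambda>\<omega>. (Ys T \<omega>, Xs S \<omega>)) = ?H (Yhs T) (\<lambda>\<omega>. (Xs S \<omega>, Ys T \<omega>))"
      by (rule pmf_cond_entropy_cong[where f=id and f'=id and g=prod.swap and g'=prod.swap]) simp_all
    also have "\<dots> \<le> ?H (Yhs T) (Ys T)"
      by (intro pmf_cond_entropy_le fin)
    finally show ?thesis .
  qed
  have "CMI p (Ys {1..L}) (Yhs {1..L}) (Xs {1..K}) =
      ?H (Yhs {1..L}) (Xs {1..K}) - ?H (Yhs {1..L}) (\<lambda>\<omega>. (Ys {1..L} \<omega>, Xs {1..K} \<omega>))"
    by (intro CMI_eq_cond_entropy fin) simp_all
  moreover have "CMI p (Ys ({1..L} - T)) (Yhs ({1..L} - T)) (Xs {1..K}) =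
      ?H (Yhs ({1..L} - T)) (Xs {1..K}) - ?H (Yhs ({1..L} - T)) (\<lambda>\<omega>. (Ys ({1..L} - T) \<omega>, Xs {1..K} \<omega>))"
    by (intro CMI_eq_cond_entropy fin) simp_all
  moreover have "CMI p (Xs ({1..K} - S)) (Yhs T) (Xs S) = ?H (Yhs T) (Xs S) - ?H (Yhs T) (Xs {1..K})"
    unfolding pmf_cond_entropy_Xs_split[OF S, symmetric] by (intro CMI_eq_cond_entropy fin) simp_all
  moreover have "CMI p (Ys T) (Yhs T) (Xs S) =
      ?H (Yhs T) (Xs S) - ?H (Yhs T) (\<lambda>\<omega>. (Ys T \<omega>, Xs S \<omega>))"
    by (intro CMI_eq_cond_entropy fin)
  ultimately show ?thesis
    using pmf_cond_entropy_Yhs_split[OF T, of p "Xs {1..K}"]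
      pmf_cond_entropy_Yhs_split[OF T, of p "\<lambda>\<omega>. (Ys {1..L} \<omega>, Xs {1..K} \<omega>)"]
      markov_Y markov_YTc markov_T drop_Yhs drop_Xs
    by linarith
qed

lemma dominant_face_lower_bound:
  assumes "(R, C) \<in> dominant_face K L p" "S \<subseteq> {1..K}" "T \<subseteq> {1..L}"
  shows "CMI p (Ys T) (Yhs T) (Xs {1..K}) - CMI p (Xs S) (Yhs ({1..L} - T)) (Xs ({1..K} - S))
           \<le> sum C T - sum R S"
  using assms unfolding dominant_face_def R_JD_def by blast

lemma dominant_face_upper_bound:
  fixes px :: "nat \<Rightarrow> 'a::finite pmf" and W :: "(nat \<Rightarrow> 'a) \<Rightarrow> (nat \<Rightarrow> 'b::finite) pmf"
    and Q :: "nat \<Rightarrow> 'b \<Rightarrow> 'c::finite pmf"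
  assumes D: "(R, C) \<in> dominant_face K L (jd_pmf K L px W Q)"
    and S: "S \<subseteq> {1..K}" and T: "T \<subseteq> {1..L}"
  shows "sum C T - sum R S \<le> CMI (jd_pmf K L px W Q) (Ys T) (Yhs T) (Xs S)"
proof -
  let ?p = "jd_pmf K L px W Q"
  have "{1..K} - ({1..K} - S) = S" "{1..L} - ({1..L} - T) = T"
    using S T by auto
  then have "CMI ?p (Ys ({1..L} - T)) (Yhs ({1..L} - T)) (Xs {1..K}) - CMI ?p (Xs ({1..K} - S)) (Yhs T) (Xs S)
      \<le> sum C ({1..L} - T) - sum R ({1..K} - S)"
    using dominant_face_lower_bound[OF D, of "{1..K} - S" "{1..L} - T"] by simp
  moreover have "sum C {1..L} - sum R {1..K} = CMI ?p (Ys {1..L}) (Yhs {1..L}) (Xs {1..K})"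
    using D unfolding dominant_face_def by blast
  moreover have "sum C {1..L} = sum C ({1..L} - T) + sum C T" "sum R {1..K} = sum R ({1..K} - S) + sum R S"
    using S T by (simp_all add: sum.subset_diff)
  ultimately show ?thesis
    using jd_CMI_complement_le[OF S T, of px W Q] by linarith
qed

lemma mem_dominant_face_if_bounds:
  fixes K L :: nat and px :: "nat \<Rightarrow> 'a::finite pmf" and W :: "(nat \<Rightarrow> 'a) \<Rightarrow> (nat \<Rightarrow> 'b::finite) pmf"
    and Q :: "nat \<Rightarrow> 'b \<Rightarrow> 'c::finite pmf"
  defines "p \<equiv> jd_pmf K L px W Q"
  assumes bounds: "\<And>S T. S \<subseteq> {1..K} \<Longrightarrow> T \<subseteq> {1..L} \<Longrightarrow>
       CMI p (Ys T) (Yhs T) (Xs {1..K}) - CMI p (Xs S) (Yhs ({1..L} - T)) (Xs ({1..K} - S))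
         \<le> sum C T - sum R S \<and>
       sum C T - sum R S \<le> CMI p (Ys T) (Yhs T) (Xs S)"
  shows "(R, C) \<in> dominant_face K L p"
proof -
  note fin = finite_range_Xs finite_range_Ys finite_range_Yhs
  have empty: "Xs {} \<omega> = (\<lambda>_. undefined)" "Ys {} \<omega> = (\<lambda>_. undefined)" "Yhs {} \<omega> = (\<lambda>_. undefined)" for \<omega>
    by (simp_all add: Xs_def Ys_def Yhs_def restrict_def)
  have "0 \<le> R k" if "k \<in> {1..K}" for k
  proof -
    have "CMI p (Ys {}) (Yhs {}) (Xs {k}) = 0"
      by (intro CMI_const_left[where c="\<lambda>_. undefined"] fin empty) simp_all
    then show ?thesis
      using bounds[of "{k}" "{}"] that by simp
  qed
  moreover have "0 \<le> C l" if "l \<in> {1..L}" for l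
  proof -
    have "CMI p (Xs {}) (Yhs ({1..L} - {l})) (Xs {1..K}) = 0"
      by (intro CMI_const_left[where c="\<lambda>_. undefined"] fin empty) simp_all
    moreover have "0 \<le> CMI p (Ys {l}) (Yhs {l}) (Xs {1..K})"
      by (intro CMI_nonneg fin) simp_all
    ultimately show ?thesis
      using bounds[of "{}" "{l}"] that by simp
  qed
  moreover have "sum C {1..L} - sum R {1..K} = CMI p (Ys {1..L}) (Yhs {1..L}) (Xs {1..K})"
  proof -
    have "CMI p (Xs {1..K}) (Yhs {}) (Xs {}) = 0"
      by (intro CMI_const_right[where c="\<lambda>_. undefined"] fin empty) simp_all
    then show ?thesis
      using bounds[of "{1..K}" "{1..L}"] by simp
  qed
  ultimately show ?thesis
    using bounds unfolding dominant_face_def R_JD_def by blast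
qed

theorem lemma3:
  fixes K L :: nat
    and px :: "nat \<Rightarrow> 'a::finite pmf"
    and W :: "(nat \<Rightarrow> 'a) \<Rightarrow> (nat \<Rightarrow> 'b::finite) pmf"
    and Q :: "nat \<Rightarrow> 'b \<Rightarrow> 'c::finite pmf"
  assumes "1 \<le> K" and "1 \<le> L"
  shows "dominant_face K L (jd_pmf K L px W Q) =
    {(R, C). \<forall>S\<subseteq>{1..K}. \<forall>T\<subseteq>{1..L}.
       CMI (jd_pmf K L px W Q) (Ys T) (Yhs T) (Xs {1..K})
         - CMI (jd_pmf K L px W Q) (Xs S) (Yhs ({1..L} - T)) (Xs ({1..K} - S))
       \<le> sum C T - sum R S \<and>
       sum C T - sum R S \<le> CMI (jd_pmf K L px W Q) (Ys T) (Yhs T) (Xs S)}"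
  by (auto intro: mem_dominant_face_if_bounds dominant_face_lower_bound dominant_face_upper_bound
      simp del: One_nat_def)

end
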